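(* Let $n\ge3$ and $q=\frac{2n}{n-2}$. Let $u_0>0$. There exists a solution $U$ on $[0,\infty)$ of $$-U''=U^{-q-1}-U^{q-1}$$ satisfying $U(0)=u_0$ and $\lim_{x\to\infty}U(x)=1$, with $U$ converging rapidly to $1$ at infinity. Moreover $U$ satisfies $$U'=\sqrt{\tfrac{2}{q}}\left[U^{-q/2}-U^{q/2}\right],$$ and $U'(x)\to0$ rapidly as $x\to\infty$.
   Context: A function $f$ converges rapidly to $L$ at infinity if $\lim_{x\to\infty}|f(x)-L|\,x^m=0$ for every $m\in\mathbb{R}$. *)

theory Defs
  imports "HOL-Analysis.Analysis"
begin

definition converges_rapidly :: "(real \<Rightarrow> real) \<Rightarrow> real \<Rightarrow> bool" where
  "converges_rapidly f L \<longleftrightarrow> (\<forall>m::real. ((\<lambda>x. \<bar>f x - L\<bar> * x powr m) \<longlongrightarrow> 0) at_top)"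

end

theory Submission
  imports Defs "HOL-Real_Asymp.Real_Asymp"
begin

text \<open>Multiplying the equation by U' shows that the energy U'^2/2 - (U^q + U^-q)/q is conserved.
  On its level -2/q at the equilibrium U = 1 the equation reduces to the first-order equation
  U' = sqrt (2/q) (U^(-q/2) - U^(q/2)), whose right-hand side is positive below 1, negative above 1,
  and comparable with |U - 1| between u0 and 1. Separating variables, the distance y = |U - 1|
  satisfies y' = - h y with a y \<le> h y \<le> b y, so it decays like exp (- a x); hence U - 1 and
  U' converge to 0 faster than any power of x.\<close>

lemma converges_rapidly_if_exp_bound:
  fixes f :: "real \<Rightarrow> real"
  assumes "a > 0" and bound: "\<And>x. x \<ge> 0 \<Longrightarrow> \<bar>f x - L\<bar> \<le> C * exp (- a * x)"
  shows "converges_rapidly f L"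
  unfolding converges_rapidly_def
proof
  fix m :: real
  have lim: "((\<lambda>x. C * exp (- a * x) * x powr m) \<longlongrightarrow> 0) at_top"
    using \<open>a > 0\<close> by real_asymp
  have "\<forall>\<^sub>F x in at_top. \<bar>f x - L\<bar> * x powr m \<le> C * exp (- a * x) * x powr m"
    using eventually_ge_at_top[of 0]
    by eventually_elim (use bound in \<open>auto intro!: mult_right_mono\<close>)
  then show "((\<lambda>x. \<bar>f x - L\<bar> * x powr m) \<longlongrightarrow> 0) at_top"
    by (intro tendsto_sandwich[OF _ _ tendsto_const lim]) auto
qed

lemma converges_rapidly_imp_tendsto:
  assumes "converges_rapidly f L"
  shows "(f \<longlongrightarrow> L) at_top"
proof -
  have "((\<lambda>x. \<bar>f x - L\<bar> * x powr 0) \<longlongrightarrow> 0) at_top"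
    using assms unfolding converges_rapidly_def by blast
  moreover have "\<forall>\<^sub>F x in at_top. \<bar>f x - L\<bar> * x powr 0 = \<bar>f x - L\<bar>"
    using eventually_gt_at_top[of 0] by eventually_elim auto
  ultimately have "((\<lambda>x. \<bar>f x - L\<bar>) \<longlongrightarrow> 0) at_top"
    by (rule Lim_transform_eventually)
  then show ?thesis
    by (simp add: tendsto_rabs_zero_iff LIM_zero_cancel)
qed

locale decay_field =
  fixes h :: "real \<Rightarrow> real" and M y0 a b :: real
  assumes y0_pos: "0 < y0" and y0_less: "y0 < M"
    and continuous: "continuous_on {0<..<M} h"
    and positive: "\<And>y. 0 < y \<Longrightarrow> y < M \<Longrightarrow> 0 < h y"
    and a_pos: "0 < a"
    and linear_bounds: "\<And>y. 0 < y \<Longrightarrow> y \<le> y0 \<Longrightarrow> a * y \<le> h y \<and> h y \<le> b * y"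
begin

lemma b_pos: "0 < b"
  using linear_bounds[OF y0_pos order.refl] a_pos y0_pos
  by (smt (verit) mult_le_cancel_right)

text \<open>The solution of y' = - h y through y0 is the inverse of the time map, the integral of 1 / h
  from y to y0. The integrals are based at y1 \<in> (y0, M) so that the time map is differentiable at
  y0, and the inverse is taken on (0, y2) with y0 < y2 < y1 so that the solution is also defined
  for slightly negative times.\<close>

definition "y1 = (y0 + M) / 2"
definition "y2 = (y0 + y1) / 2"
definition "time y = integral {y..y1} (\<lambda>t. 1 / h t) - integral {y0..y1} (\<lambda>t. 1 / h t)"

lemma y0_less_y2: "y0 < y2" and y2_less_y1: "y2 < y1" and y1_less: "y1 < M"
  using y0_less by (auto simp: y1_def y2_def)

lemma time_has_derivative:
  assumes "0 < y" "y < y1"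
  shows "(time has_real_derivative - 1 / h y) (at y)"
proof -
  have "continuous_on {y/2..y1} h"
    by (rule continuous_on_subset[OF continuous]) (use assms y1_less in auto)
  then have "continuous_on {y/2..y1} (\<lambda>t. 1 / h t)"
    using positive assms y1_less by (intro continuous_intros) (auto simp: less_imp_neq[symmetric])
  then have "((\<lambda>x. integral {x..y1} (\<lambda>t. 1 / h t)) has_real_derivative - (1 / h y))
      (at y within {y/2..y1})"
    by (rule integral_has_real_derivative') (use assms in auto)
  moreover have "at y within {y/2..y1} = at y"
    by (rule at_within_interior) (use assms in auto)
  ultimately show ?thesis
    unfolding time_def by (auto intro!: derivative_eq_intros)
qed

lemma time_continuous: "0 < y \<Longrightarrow> y < y1 \<Longrightarrow> isCont time y"
  using time_has_derivative DERIV_isCont by blast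

lemma time_y0: "time y0 = 0"
  by (simp add: time_def)

lemma time_decreasing:
  assumes "0 < y" "y < z" "z < y1"
  shows "time z < time y"
proof (rule DERIV_neg_imp_decreasing[OF \<open>y < z\<close>])
  fix t assume "y \<le> t" "t \<le> z"
  with assms have "(time has_real_derivative - 1 / h t) (at t)" "0 < h t"
    using time_has_derivative positive[of t] y1_less by auto
  then show "\<exists>D. (time has_real_derivative D) (at t) \<and> D < 0"
    by (intro exI conjI) auto
qed

lemma time_lower_bound:
  assumes "0 < y" "y \<le> y0"
  shows "(ln y0 - ln y) / b \<le> time y"
proof -
  have "time y0 + ln y0 / b \<le> time y + ln y / b"
  proof (rule DERIV_nonpos_imp_nonincreasing[OF \<open>y \<le> y0\<close>])
    fix t assume t: "y \<le> t" "t \<le> y0"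
    with assms have "0 < t" "t < y1" "h t \<le> b * t" "0 < h t"
      using linear_bounds[of t] positive[of t] y0_less_y2 y2_less_y1 y1_less by auto
    then have "1 / t / b \<le> 1 / h t"
      using b_pos by (auto simp: field_simps)
    moreover have "((\<lambda>t. time t + ln t / b) has_real_derivative (- 1 / h t + 1 / t / b)) (at t)"
      using \<open>0 < t\<close> \<open>t < y1\<close> b_pos by (auto intro!: derivative_eq_intros time_has_derivative)
    ultimately show "\<exists>D. ((\<lambda>t. time t + ln t / b) has_real_derivative D) (at t) \<and> D \<le> 0"
      by force
  qed
  then show ?thesis
    using time_y0 b_pos by (simp add: field_simps)
qed

lemma time_surjective:
  assumes "time y2 < x"
  shows "\<exists>y. 0 < y \<and> y < y2 \<and> time y = x"
proof -
  have "\<exists>y. z \<le> y \<and> y \<le> y2 \<and> time y = x"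
    if "0 < z" "z \<le> y2" "time y2 \<le> x" "x \<le> time z" for z
    by (rule IVT2) (use that y2_less_y1 in \<open>auto intro!: time_continuous\<close>)
  moreover obtain z where "0 < z" "z \<le> y0" "x \<le> time z"
  proof (cases "x \<le> 0")
    case True
    then show ?thesis
      using that[of y0] y0_pos time_y0 by simp
  next
    case False
    define z where "z = y0 * exp (- b * x)"
    have z: "0 < z" "z \<le> y0"
      using y0_pos b_pos False by (auto simp: z_def mult_le_cancel_left1)
    have "x = (ln y0 - ln z) / b"
      using y0_pos b_pos by (simp add: z_def ln_mult)
    also have "\<dots> \<le> time z"
      by (rule time_lower_bound[OF z])
    finally show ?thesis
      using that z by blast
  qed
  ultimately obtain y where "z \<le> y" "y \<le> y2" "time y = x"
    using assms y0_less_y2 by fastforce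
  moreover have "y \<noteq> y2"
    using assms \<open>time y = x\<close> by auto
  ultimately show ?thesis
    using \<open>0 < z\<close> by (intro exI[of _ y]) auto
qed

definition "sol x = (THE y. 0 < y \<and> y < y2 \<and> time y = x)"

lemma time_inj:
  assumes "0 < y" "y < y2" "0 < z" "z < y2" "time y = time z"
  shows "y = z"
  using time_decreasing[of y z] time_decreasing[of z y] assms y2_less_y1
  by (cases y z rule: linorder_cases) auto

lemma sol_spec:
  assumes "time y2 < x"
  shows "0 < sol x \<and> sol x < y2 \<and> time (sol x) = x"
proof -
  obtain y where y: "0 < y \<and> y < y2 \<and> time y = x"
    using time_surjective[OF assms] by blast
  then have "sol x = y"
    unfolding sol_def by (rule the_equality) (use time_inj y in blast)
  with y show ?thesis by simp
qed

lemma time_y2_neg: "time y2 < 0"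
  using time_decreasing[of y0 y2] time_y0 y0_pos y0_less_y2 y2_less_y1 by simp

lemma sol_time: "0 < y \<Longrightarrow> y < y2 \<Longrightarrow> sol (time y) = y"
  using sol_spec[of "time y"] time_decreasing[of y y2] time_inj[of "sol (time y)" y] y2_less_y1 by auto

lemma sol_0: "sol 0 = y0"
  using sol_time[of y0] time_y0 y0_pos y0_less_y2 by simp

lemma sol_le:
  assumes "0 \<le> x"
  shows "sol x \<le> y0"
proof (rule ccontr)
  assume "\<not> sol x \<le> y0"
  then have "time (sol x) < time y0"
    using time_decreasing[of y0 "sol x"] sol_spec[of x] assms time_y2_neg y0_pos y2_less_y1 by auto
  then show False
    using sol_spec[of x] assms time_y2_neg time_y0 by auto
qed

lemma sol_has_derivative:
  assumes "time y2 < x"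
  shows "(sol has_real_derivative - h (sol x)) (at x)"
proof -
  have s: "0 < sol x" "sol x < y2" "time (sol x) = x"
    using sol_spec[OF assms] by auto
  then have "sol x < y1" "0 < h (sol x)"
    using y2_less_y1 y1_less positive[of "sol x"] by auto
  have "isCont sol (time (sol x))"
    by (rule isCont_inverse_function2[where a = "sol x / 2" and b = "(sol x + y2) / 2"])
      (use s y2_less_y1 in \<open>auto intro!: sol_time time_continuous\<close>)
  moreover have "(time has_real_derivative - 1 / h (sol x)) (at (sol x))"
    using s \<open>sol x < y1\<close> by (intro time_has_derivative)
  ultimately have "(sol has_real_derivative inverse (- 1 / h (sol x))) (at x)"
    by (intro DERIV_inverse_function[where f = time and a = "time y2" and b = "x + 1"])
      (use s \<open>0 < h (sol x)\<close> assms sol_spec in auto)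
  then show ?thesis
    by simp
qed

lemma sol_exp_decay:
  assumes "0 \<le> x"
  shows "sol x \<le> y0 * exp (- a * x)"
proof -
  have "exp (a * x) * sol x \<le> exp (a * 0) * sol 0"
  proof (rule DERIV_nonpos_imp_nonincreasing[OF assms])
    fix t assume t: "0 \<le> t" "t \<le> x"
    then have "time y2 < t"
      using time_y2_neg by linarith
    then have "((\<lambda>t. exp (a * t) * sol t) has_real_derivative
        exp (a * t) * (a * sol t - h (sol t))) (at t)"
      by (auto intro!: derivative_eq_intros sol_has_derivative simp: algebra_simps)
    moreover have "a * sol t \<le> h (sol t)"
      using linear_bounds[of "sol t"] sol_spec[OF \<open>time y2 < t\<close>] sol_le[of t] t by auto
    ultimately show "\<exists>D. ((\<lambda>t. exp (a * t) * sol t) has_real_derivative D) (at t) \<and> D \<le> 0"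
      by (intro exI conjI) (auto simp: mult_nonneg_nonpos)
  qed
  then show ?thesis
    by (simp add: sol_0 exp_minus field_simps)
qed

lemma decaying_solution:
  obtains Y where "Y 0 = y0"
    "\<And>x. 0 \<le> x \<Longrightarrow> 0 < Y x \<and> Y x \<le> y0 * exp (- a * x) \<and> h (Y x) \<le> b * Y x
      \<and> (Y has_real_derivative - h (Y x)) (at x)"
proof (rule that[of sol])
  show "sol 0 = y0"
    by (rule sol_0)
  fix x :: real
  assume "0 \<le> x"
  then have "time y2 < x"
    using time_y2_neg by linarith
  then show "0 < sol x \<and> sol x \<le> y0 * exp (- a * x) \<and> h (sol x) \<le> b * sol x
      \<and> (sol has_real_derivative - h (sol x)) (at x)"
    using sol_spec sol_le[OF \<open>0 \<le> x\<close>] sol_exp_decay[OF \<open>0 \<le> x\<close>] linear_bounds sol_has_derivative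
    by blast
qed

end

lemma powr_diff_mean_value:
  fixes s t q :: real
  assumes "0 < s" "0 < t"
  obtains z where "min s t \<le> z" "z \<le> max s t" "t powr q - s powr q = (t - s) * (q * z powr (q - 1))"
proof -
  have mvt: "\<exists>z. v < z \<and> z < w \<and> w powr q - v powr q = (w - v) * (q * z powr (q - 1))"
    if "0 < v" "v < w" for v w :: real
    by (rule MVT2[OF \<open>v < w\<close>]) (use that in \<open>auto intro!: has_real_derivative_powr\<close>)
  consider "s < t" | "s = t" | "t < s"
    by linarith
  then show ?thesis
  proof cases
    case 1
    then obtain z where "s < z" "z < t" "t powr q - s powr q = (t - s) * (q * z powr (q - 1))"
      using mvt[of s t] assms by blast
    then show ?thesis
      using that[of z] by simp
  next
    case 2
    then show ?thesis
      using that[of s] by simp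
  next
    case 3
    then obtain z where "t < z" "z < s" "s powr q - t powr q = (s - t) * (q * z powr (q - 1))"
      using mvt[of t s] assms by blast
    then show ?thesis
      using that[of z] by (simp add: algebra_simps)
  qed
qed

definition heteroclinic_slope :: "real \<Rightarrow> real \<Rightarrow> real" where
  "heteroclinic_slope q u = sqrt (2 / q) * (u powr (- q / 2) - u powr (q / 2))"

lemma heteroclinic_slope_factor:
  fixes q u lo hi :: real
  assumes "1 \<le> q" "0 < lo" "lo \<le> 1" "1 \<le> hi" "lo \<le> u" "u \<le> hi"
  obtains k where "heteroclinic_slope q u = (1 - u) * k"
    "sqrt (2 / q) * q * lo powr (q - 1) / hi powr (q / 2) \<le> k"
    "k \<le> sqrt (2 / q) * q * hi powr (q - 1) / lo powr (q / 2)"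
proof -
  have "0 < u"
    using assms by linarith
  obtain z where z: "min 1 u \<le> z" "z \<le> max 1 u"
    and mvt: "u powr q - 1 powr q = (u - 1) * (q * z powr (q - 1))"
    using powr_diff_mean_value[of 1 u q] \<open>0 < u\<close> by auto
  have "lo \<le> z" "z \<le> hi"
    using z assms by auto
  define c where "c = sqrt (2 / q)"
  define v where "v = u powr (q / 2)"
  have "0 < v" "v * v = u powr q"
    using \<open>0 < u\<close> by (simp_all add: v_def powr_add[symmetric])
  have "heteroclinic_slope q u = c * (1 / v - v)"
    unfolding heteroclinic_slope_def c_def v_def by (simp add: powr_minus_divide)
  also have "\<dots> = c * (1 - u powr q) / v"
    using \<open>0 < v\<close> \<open>v * v = u powr q\<close> by (simp add: field_simps)
  also have "1 - u powr q = (1 - u) * (q * z powr (q - 1))"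
    using mvt by (simp add: algebra_simps)
  also have "c * \<dots> / v = (1 - u) * (c * q * z powr (q - 1) / v)"
    by simp
  finally have factorization: "heteroclinic_slope q u = (1 - u) * (c * q * z powr (q - 1) / v)" .
  moreover have "lo powr (q - 1) \<le> z powr (q - 1)" "z powr (q - 1) \<le> hi powr (q - 1)"
    "lo powr (q / 2) \<le> v" "v \<le> hi powr (q / 2)"
    using assms \<open>lo \<le> z\<close> \<open>z \<le> hi\<close> by (auto simp: v_def intro!: powr_mono2)
  moreover have "0 < c * q"
    using assms by (simp add: c_def)
  ultimately have "c * q * lo powr (q - 1) / hi powr (q / 2) \<le> c * q * z powr (q - 1) / v"
    "c * q * z powr (q - 1) / v \<le> c * q * hi powr (q - 1) / lo powr (q / 2)"
    using \<open>0 < v\<close> \<open>0 < lo\<close> by (auto intro!: frac_le mult_left_mono)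
  with factorization show ?thesis
    using that unfolding c_def by blast
qed

lemma heteroclinic_slope_has_derivative:
  assumes "0 < u"
  shows "(heteroclinic_slope q has_real_derivative
           - sqrt (2 / q) * (q / 2) * (u powr (- q / 2 - 1) + u powr (q / 2 - 1))) (at u)"
  unfolding heteroclinic_slope_def using assms
  by (auto intro!: derivative_eq_intros simp: algebra_simps)

lemma heteroclinic_slope_derivative_mult:
  assumes "0 < q" "0 < u"
  shows "- sqrt (2 / q) * (q / 2) * (u powr (- q / 2 - 1) + u powr (q / 2 - 1))
           * heteroclinic_slope q u = u powr (q - 1) - u powr (- q - 1)"
proof -
  define c where "c = sqrt (2 / q)"
  have "c * c * (q / 2) = 1"
    using assms by (simp add: c_def)
  have exponent_sum: "u powr x * u powr y = u powr z" if "x + y = z" for x y z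
    using that by (simp add: powr_add[symmetric])
  have "- c * (q / 2) * (u powr (- q / 2 - 1) + u powr (q / 2 - 1)) * (c * (u powr (- q / 2) - u powr (q / 2)))
      = (c * c * (q / 2)) * (u powr (q / 2 - 1) * u powr (q / 2) - u powr (- q / 2 - 1) * u powr (- q / 2)
          + u powr (- q / 2 - 1) * u powr (q / 2) - u powr (q / 2 - 1) * u powr (- q / 2))"
    by (simp add: algebra_simps)
  also have "\<dots> = u powr (q - 1) - u powr (- q - 1) + u powr (- 1) - u powr (- 1)"
    unfolding \<open>c * c * (q / 2) = 1\<close> by (simp add: exponent_sum)
  finally show ?thesis
    by (simp add: heteroclinic_slope_def c_def)
qed

lemma heteroclinic_slope_second_derivative:
  assumes "0 < q" "0 < U x" and "(U has_real_derivative heteroclinic_slope q (U x)) (at x)"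
  shows "((\<lambda>x. heteroclinic_slope q (U x)) has_real_derivative U x powr (q - 1) - U x powr (- q - 1))
    (at x)"
  using DERIV_chain[OF heteroclinic_slope_has_derivative[where q = q, OF assms(2)] assms(3)]
    heteroclinic_slope_derivative_mult[OF assms(1,2)]
  by (simp add: o_def)

text \<open>With s the side of 1 on which u0 lies, U = 1 + s y solves U' = heteroclinic_slope q U
  iff the distance y solves y' = - h y for the field h below.\<close>

lemma decay_field_heteroclinic_distance:
  fixes q u0 :: real
  assumes "1 \<le> q" "0 < u0" "u0 \<noteq> 1"
  defines "s \<equiv> if 1 < u0 then 1 else - 1"
  shows "decay_field (\<lambda>y. - s * heteroclinic_slope q (1 + s * y)) (max u0 1) \<bar>u0 - 1\<bar>
    (sqrt (2 / q) * q * min u0 1 powr (q - 1) / max u0 1 powr (q / 2))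
    (sqrt (2 / q) * q * max u0 1 powr (q - 1) / min u0 1 powr (q / 2))"
    (is "decay_field ?h ?M ?y0 ?a ?b")
proof
  have factor: "- s * heteroclinic_slope q (1 + s * y) = y * k"
    if "heteroclinic_slope q (1 + s * y) = (1 - (1 + s * y)) * k" for y k
    using that by (simp add: s_def algebra_simps)
  show "0 < ?y0" "?y0 < ?M"
    using assms by auto
  show "0 < ?a"
    using assms by simp
  have base_pos: "0 < 1 + s * y" if "0 < y" "y < ?M" for y
    using that assms by (auto simp: s_def)
  then show "continuous_on {0<..<?M} ?h"
    unfolding heteroclinic_slope_def by (intro continuous_intros) (fastforce dest: base_pos)+
  show "0 < ?h y" if y: "0 < y" "y < ?M" for y
  proof -
    let ?lo = "min 1 (1 + s * y)" and ?hi = "max 1 (1 + s * y)"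
    obtain k where k: "heteroclinic_slope q (1 + s * y) = (1 - (1 + s * y)) * k"
      and lower: "sqrt (2 / q) * q * ?lo powr (q - 1) / ?hi powr (q / 2) \<le> k"
      using heteroclinic_slope_factor[of q ?lo ?hi "1 + s * y"] assms base_pos[OF y] by auto
    have "0 < sqrt (2 / q) * q * ?lo powr (q - 1) / ?hi powr (q / 2)"
      using assms base_pos[OF y] by simp
    with lower have "0 < k"
      by linarith
    then show ?thesis
      unfolding factor[OF k] using y by simp
  qed
  show "?a * y \<le> ?h y \<and> ?h y \<le> ?b * y" if "0 < y" "y \<le> ?y0" for y
  proof -
    have "min u0 1 \<le> 1 + s * y" "1 + s * y \<le> max u0 1"
      using that by (auto simp: s_def)
    then obtain k where k: "heteroclinic_slope q (1 + s * y) = (1 - (1 + s * y)) * k"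
      and "?a \<le> k" "k \<le> ?b"
      using heteroclinic_slope_factor[of q "min u0 1" "max u0 1" "1 + s * y"] assms by auto
    then have "?a * y \<le> y * k" "y * k \<le> ?b * y"
      using \<open>0 < y\<close> by (metis less_imp_le mult.commute mult_right_mono)+
    then show ?thesis
      unfolding factor[OF k] by blast
  qed
qed

lemma heteroclinic_solution_exists:
  fixes q u0 :: real
  assumes "1 \<le> q" "0 < u0"
  obtains U a C D where "0 < a" "U 0 = u0"
    "\<And>x. 0 \<le> x \<Longrightarrow> 0 < U x \<and> (U has_real_derivative heteroclinic_slope q (U x)) (at x)"
    "\<And>x. 0 \<le> x \<Longrightarrow> \<bar>U x - 1\<bar> \<le> C * exp (- a * x) \<and> \<bar>heteroclinic_slope q (U x)\<bar> \<le> D * exp (- a * x)"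
proof (cases "u0 = 1")
  case True
  then show ?thesis
    using that[of 1 "\<lambda>_. 1" 0 0] by (simp add: heteroclinic_slope_def)
next
  case False
  define s :: real where "s = (if 1 < u0 then 1 else - 1)"
  define h where "h y = - s * heteroclinic_slope q (1 + s * y)" for y
  define a where "a = sqrt (2 / q) * q * min u0 1 powr (q - 1) / max u0 1 powr (q / 2)"
  define b where "b = sqrt (2 / q) * q * max u0 1 powr (q - 1) / min u0 1 powr (q / 2)"
  interpret decay_field h "max u0 1" "\<bar>u0 - 1\<bar>" a b
    unfolding h_def s_def a_def b_def by (rule decay_field_heteroclinic_distance[OF assms False])
  obtain Y where "Y 0 = \<bar>u0 - 1\<bar>" and Y: "\<And>x. 0 \<le> x \<Longrightarrow> 0 < Y x
      \<and> Y x \<le> \<bar>u0 - 1\<bar> * exp (- a * x) \<and> h (Y x) \<le> b * Y x \<and> (Y has_real_derivative - h (Y x)) (at x)"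
    using decaying_solution by blast
  have slope: "heteroclinic_slope q (1 + s * y) = - s * h y" for y
    by (simp add: h_def s_def)
  show ?thesis
  proof (rule that[of a "\<lambda>x. 1 + s * Y x" "\<bar>u0 - 1\<bar>" "b * \<bar>u0 - 1\<bar>"])
    show "0 < a" "1 + s * Y 0 = u0"
      using a_pos \<open>Y 0 = \<bar>u0 - 1\<bar>\<close> by (auto simp: s_def)
    fix x :: real
    assume "0 \<le> x"
    note Yx = Y[OF this]
    have "exp (- a * x) \<le> 1"
      using a_pos \<open>0 \<le> x\<close> by simp
    then have "Y x \<le> \<bar>u0 - 1\<bar>"
      using Yx mult_left_le[of "exp (- a * x)" "\<bar>u0 - 1\<bar>"] by linarith
    then have "0 < 1 + s * Y x" "0 < h (Y x)"
      using Yx positive[of "Y x"] y0_less by (auto simp: s_def)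
    have "((\<lambda>x. 1 + s * Y x) has_real_derivative s * - h (Y x)) (at x)"
      using Yx by (auto intro!: derivative_eq_intros)
    with \<open>0 < 1 + s * Y x\<close> show "0 < 1 + s * Y x
        \<and> ((\<lambda>x. 1 + s * Y x) has_real_derivative heteroclinic_slope q (1 + s * Y x)) (at x)"
      by (simp add: slope)
    have "h (Y x) \<le> b * Y x"
      using Yx by blast
    also have "\<dots> \<le> b * (\<bar>u0 - 1\<bar> * exp (- a * x))"
      using Yx b_pos by (intro mult_left_mono) auto
    finally have "h (Y x) \<le> b * \<bar>u0 - 1\<bar> * exp (- a * x)"
      by (simp add: mult.assoc)
    with Yx \<open>0 < h (Y x)\<close> show "\<bar>1 + s * Y x - 1\<bar> \<le> \<bar>u0 - 1\<bar> * exp (- a * x)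
        \<and> \<bar>heteroclinic_slope q (1 + s * Y x)\<bar> \<le> b * \<bar>u0 - 1\<bar> * exp (- a * x)"
      unfolding slope by (auto simp: s_def)
  qed
qed

theorem proposition4p2:
  fixes n :: nat and q u0 :: real
  assumes "n \<ge> 3"
    and "q = 2 * real n / (real n - 2)"
    and "u0 > 0"
  shows "\<exists>U U' :: real \<Rightarrow> real.
           (\<forall>x\<ge>0. U x > 0
              \<and> (U has_real_derivative U' x) (at x within {0..})
              \<and> (U' has_real_derivative (U x powr (q - 1) - U x powr (- q - 1))) (at x within {0..}))
         \<and> U 0 = u0
         \<and> (U \<longlongrightarrow> 1) at_top
         \<and> converges_rapidly U 1
         \<and> (\<forall>x\<ge>0. U' x = sqrt (2 / q) * (U x powr (- q / 2) - U x powr (q / 2)))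
         \<and> (U' \<longlongrightarrow> 0) at_top
         \<and> converges_rapidly U' 0"
proof -
  have "0 < real n - 2"
    using assms(1) by simp
  then have "1 \<le> q"
    unfolding assms(2) by (simp add: field_simps)
  obtain U a C D where "0 < a" "U 0 = u0"
    and solves: "\<And>x. 0 \<le> x \<Longrightarrow> 0 < U x \<and> (U has_real_derivative heteroclinic_slope q (U x)) (at x)"
    and decay: "\<And>x. 0 \<le> x \<Longrightarrow> \<bar>U x - 1\<bar> \<le> C * exp (- a * x)
      \<and> \<bar>heteroclinic_slope q (U x)\<bar> \<le> D * exp (- a * x)"
    using heteroclinic_solution_exists[OF \<open>1 \<le> q\<close> \<open>u0 > 0\<close>] by metis
  define U' where "U' = (\<lambda>x. heteroclinic_slope q (U x))"
  have rapid: "converges_rapidly U 1" "converges_rapidly U' 0"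
    using converges_rapidly_if_exp_bound[where f = U and L = 1 and C = C, OF \<open>0 < a\<close>]
      converges_rapidly_if_exp_bound[where f = U' and L = 0 and C = D, OF \<open>0 < a\<close>] decay
    unfolding U'_def by auto
  have "\<forall>x\<ge>0. U x > 0 \<and> (U has_real_derivative U' x) (at x within {0..})
      \<and> (U' has_real_derivative (U x powr (q - 1) - U x powr (- q - 1))) (at x within {0..})"
    using solves heteroclinic_slope_second_derivative[of q U] \<open>1 \<le> q\<close>
    by (auto simp: U'_def intro: has_field_derivative_at_within)
  moreover have "\<forall>x\<ge>0. U' x = sqrt (2 / q) * (U x powr (- q / 2) - U x powr (q / 2))"
    by (simp add: U'_def heteroclinic_slope_def)
  ultimately show ?thesis
    using \<open>U 0 = u0\<close> rapid converges_rapidly_imp_tendsto[OF rapid(1)]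
      converges_rapidly_imp_tendsto[OF rapid(2)] by blast
qed

end
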